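(* Let $\mathcal A_1=(A,\to_{\mathcal A_1})$ and $\mathcal A_2=(A,\to_{\mathcal A_2})$ be ARSs on the same set $A$ and $\sim$ an equivalence relation on $A$. Suppose $\mathrm{NF}(\mathcal A_2)\subseteq\mathrm{NF}(\mathcal A_1)$ and $\to_{\mathcal A_2}\subseteq(\sim\cdot\to_{\mathcal A_1}\cdot\sim)^+$. If $\mathcal A_1$ is complete modulo $\sim$, then $\mathcal A_2$ is complete modulo $\sim$ and normalization equivalent modulo $\sim$ to $\mathcal A_1$.
   Context: $\mathrm{NF}(\mathcal A)$ is the set of normal forms of $\mathcal A$. $a\to^!_{\mathcal A}b$ means $a\to^*_{\mathcal A}b$ and $b\in\mathrm{NF}(\mathcal A)$. $\mathcal A$ is terminating modulo $\sim$ if $\sim\cdot\to_{\mathcal A}\cdot\sim$ admits no infinite sequence; Church–Rosser modulo $\sim$ if $(\leftarrow_{\mathcal A}\cup\to_{\mathcal A}\cup\sim)^*\subseteq\to^*_{\mathcal A}\cdot\sim\cdot\leftarrow^*_{\mathcal A}$; complete modulo $\sim$ if both. Normalization equivalent modulo $\sim$: $\to^!_{\mathcal A_1}\cdot\sim\;=\;\to^!_{\mathcal A_2}\cdot\sim$. *)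

theory Defs
  imports Main
begin

text \<open>An abstract rewrite system on a set A is modelled as a relation on a type 'a
(the type plays the role of the carrier A).\<close>

definition NF :: "'a rel \<Rightarrow> 'a set" where
  "NF R = {a. \<not> (\<exists>b. (a, b) \<in> R)}"

definition normalizes_to :: "'a rel \<Rightarrow> 'a rel" where
  "normalizes_to R = {(a, b). (a, b) \<in> R\<^sup>* \<and> b \<in> NF R}"

definition terminating_modulo :: "'a rel \<Rightarrow> 'a rel \<Rightarrow> bool" where
  "terminating_modulo R E \<longleftrightarrow> \<not> (\<exists>f :: nat \<Rightarrow> 'a. \<forall>i. (f i, f (Suc i)) \<in> E O R O E)"

definition CR_modulo :: "'a rel \<Rightarrow> 'a rel \<Rightarrow> bool" where
  "CR_modulo R E \<longleftrightarrow> (R\<inverse> \<union> R \<union> E)\<^sup>* \<subseteq> R\<^sup>* O E O (R\<^sup>*)\<inverse>"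

definition complete_modulo :: "'a rel \<Rightarrow> 'a rel \<Rightarrow> bool" where
  "complete_modulo R E \<longleftrightarrow> terminating_modulo R E \<and> CR_modulo R E"

definition normalization_equivalent_modulo :: "'a rel \<Rightarrow> 'a rel \<Rightarrow> 'a rel \<Rightarrow> bool" where
  "normalization_equivalent_modulo R1 R2 E \<longleftrightarrow> normalizes_to R1 O E = normalizes_to R2 O E"

end

theory Submission
  imports Defs
begin

text \<open>Since \<open>\<sim>\<close> is transitive, \<open>\<sim> \<cdot> \<rightarrow>\<^sub>2 \<cdot> \<sim>\<close> is contained in \<open>(\<sim> \<cdot> \<rightarrow>\<^sub>1 \<cdot> \<sim>)\<^sup>+\<close>, so
  termination modulo \<open>\<sim>\<close> transfers from \<open>\<A>\<^sub>1\<close> to \<open>\<A>\<^sub>2\<close> and every element has normal forms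
  in both systems. Every \<open>\<A>\<^sub>2\<close>-step is an \<open>\<A>\<^sub>1\<close>-conversion modulo \<open>\<sim>\<close>, so two
  \<open>\<A>\<^sub>2\<close>-convertible \<open>\<A>\<^sub>2\<close>-normal forms are \<open>\<A>\<^sub>1\<close>-convertible \<open>\<A>\<^sub>1\<close>-normal forms, hence
  \<open>\<sim>\<close>-equivalent by the Church--Rosser property of \<open>\<A>\<^sub>1\<close>.\<close>

abbreviation conversion_modulo :: "'a rel \<Rightarrow> 'a rel \<Rightarrow> 'a rel" where
  "conversion_modulo R E \<equiv> (R\<inverse> \<union> R \<union> E)\<^sup>*"

lemma terminating_modulo_iff_wf: "terminating_modulo R E \<longleftrightarrow> wf ((E O R O E)\<inverse>)"
  unfolding terminating_modulo_def wf_iff_no_infinite_down_chain by auto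

lemma terminating_modulo_imp_wf_converse:
  assumes "refl E" "terminating_modulo R E"
  shows "wf (R\<inverse>)"
proof -
  have "R \<subseteq> E O R O E" using assms(1) by (auto dest: reflD)
  then show ?thesis
    using assms(2) by (auto simp: terminating_modulo_iff_wf intro: wf_subset)
qed

lemma relcomp_trancl_absorb:
  assumes "trans E"
  shows "E O (E O R O E)\<^sup>+ O E \<subseteq> (E O R O E)\<^sup>+"
proof -
  let ?S = "E O R O E"
  have left: "E O ?S \<subseteq> ?S" and right: "?S O E \<subseteq> ?S"
    using assms by (auto dest: transD)
  have "E O ?S\<^sup>+ \<subseteq> ?S\<^sup>+"
  proof
    fix p assume "p \<in> E O ?S\<^sup>+"
    then obtain x u y where p: "p = (x, y)" "(x, u) \<in> E" "(u, y) \<in> ?S\<^sup>+" by blast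
    then obtain w where "(u, w) \<in> ?S" "(w, y) \<in> ?S\<^sup>*" by (meson tranclD)
    with p(2) left show "p \<in> ?S\<^sup>+"
      unfolding p(1) by (blast intro: rtrancl_into_trancl2)
  qed
  moreover have "?S\<^sup>+ O E \<subseteq> ?S\<^sup>+"
  proof
    fix p assume "p \<in> ?S\<^sup>+ O E"
    then obtain x u y where p: "p = (x, y)" "(x, u) \<in> ?S\<^sup>+" "(u, y) \<in> E" by blast
    then obtain w where "(x, w) \<in> ?S\<^sup>*" "(w, u) \<in> ?S" by (meson tranclD2)
    with p(3) right show "p \<in> ?S\<^sup>+"
      unfolding p(1) by (blast intro: rtrancl_into_trancl1)
  qed
  ultimately show ?thesis by blast
qed

lemma terminating_modulo_trancl_subset:
  assumes "trans E" "R2 \<subseteq> (E O R1 O E)\<^sup>+" "terminating_modulo R1 E"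
  shows "terminating_modulo R2 E"
proof -
  have "E O R2 O E \<subseteq> (E O R1 O E)\<^sup>+"
    using relcomp_trancl_absorb[OF assms(1), of R1] assms(2) by blast
  moreover have "wf (((E O R1 O E)\<^sup>+)\<inverse>)"
    using assms(3) by (simp add: terminating_modulo_iff_wf trancl_converse[symmetric] wf_trancl)
  ultimately show ?thesis
    unfolding terminating_modulo_iff_wf by (blast intro: wf_subset)
qed

lemma wf_converse_imp_normalizable:
  assumes "wf (R\<inverse>)"
  shows "\<exists>b. (a, b) \<in> normalizes_to R"
  using assms
proof (induction a rule: wf_induct_rule)
  case (less a)
  show ?case
  proof (cases "a \<in> NF R")
    case True
    then show ?thesis by (auto simp: normalizes_to_def)
  next
    case False
    then obtain c where "(a, c) \<in> R" unfolding NF_def by blast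
    moreover obtain b where "(c, b) \<in> normalizes_to R" using less \<open>(a, c) \<in> R\<close> by blast
    ultimately show ?thesis
      by (auto simp: normalizes_to_def intro: converse_rtrancl_into_rtrancl)
  qed
qed

lemma NF_rtrancl_eq: "(a, b) \<in> R\<^sup>* \<Longrightarrow> a \<in> NF R \<Longrightarrow> b = a"
  by (erule converse_rtranclE) (auto simp: NF_def)

lemma rtrancl_subset_conversion_modulo: "R\<^sup>* \<subseteq> conversion_modulo R E"
  by (rule rtrancl_mono) blast

lemma sym_conversion_modulo:
  assumes "sym E"
  shows "sym (conversion_modulo R E)"
proof -
  have "(R\<inverse> \<union> R \<union> E)\<inverse> = R\<inverse> \<union> R \<union> E" using assms by (auto dest: symD)
  then show ?thesis by (metis sym_conv_converse_eq rtrancl_converse)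
qed

lemma trancl_relcomp_subset_conversion_modulo:
  "(E O R O E)\<^sup>+ \<subseteq> conversion_modulo R E"
proof -
  have "E O R O E \<subseteq> conversion_modulo R E" by (blast intro: rtrancl_trans)
  then show ?thesis
    by (metis trancl_id trancl_mono_subset trans_rtrancl)
qed

lemma conversion_modulo_subset:
  assumes "sym E" "R2 \<subseteq> conversion_modulo R1 E"
  shows "conversion_modulo R2 E \<subseteq> conversion_modulo R1 E"
proof (rule rtrancl_subset_rtrancl)
  have "R2\<inverse> \<subseteq> conversion_modulo R1 E"
    using assms sym_conversion_modulo[OF assms(1), of R1] by (auto dest: symD)
  then show "R2\<inverse> \<union> R2 \<union> E \<subseteq> conversion_modulo R1 E" using assms(2) by blast
qed

lemma CR_modulo_conversion_NF_imp_equiv: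
  assumes "CR_modulo R E" "(a, b) \<in> conversion_modulo R E" "a \<in> NF R" "b \<in> NF R"
  shows "(a, b) \<in> E"
proof -
  obtain c d where "(a, c) \<in> R\<^sup>*" "(c, d) \<in> E" "(b, d) \<in> R\<^sup>*"
    using assms(1,2) unfolding CR_modulo_def by blast
  with assms(3,4) show ?thesis by (metis NF_rtrancl_eq)
qed

lemma normal_forms_equiv_if_conversion_subset:
  assumes "sym E" "CR_modulo R1 E" "NF R2 \<subseteq> NF R1" "R2 \<subseteq> conversion_modulo R1 E"
    and "(a, b) \<in> conversion_modulo R2 E" "a \<in> NF R2" "b \<in> NF R2"
  shows "(a, b) \<in> E"
  using CR_modulo_conversion_NF_imp_equiv[OF assms(2)] conversion_modulo_subset[OF assms(1,4)] assms(3,5-7)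
  by blast

lemma CR_modulo_if_conversion_subset:
  assumes "sym E" "CR_modulo R1 E" "NF R2 \<subseteq> NF R1" "R2 \<subseteq> conversion_modulo R1 E"
    and "wf (R2\<inverse>)"
  shows "CR_modulo R2 E"
  unfolding CR_modulo_def
proof safe
  fix x y assume xy: "(x, y) \<in> conversion_modulo R2 E"
  obtain nx ny where nx: "(x, nx) \<in> normalizes_to R2" and ny: "(y, ny) \<in> normalizes_to R2"
    using wf_converse_imp_normalizable[OF assms(5)] by blast
  have "(nx, ny) \<in> conversion_modulo R2 E"
    using nx ny xy rtrancl_subset_conversion_modulo[of R2 E] sym_conversion_modulo[OF assms(1), of R2]
    unfolding normalizes_to_def by (blast dest: symD intro: rtrancl_trans)
  then have "(nx, ny) \<in> E"
    using normal_forms_equiv_if_conversion_subset[OF assms(1-4)] nx ny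
    unfolding normalizes_to_def by blast
  then show "(x, y) \<in> R2\<^sup>* O E O (R2\<^sup>*)\<inverse>"
    using nx ny unfolding normalizes_to_def by blast
qed

lemma normal_forms_equiv_across_systems:
  assumes "sym E" "CR_modulo R1 E" "NF R2 \<subseteq> NF R1" "R2 \<subseteq> conversion_modulo R1 E"
    and "(a, b1) \<in> normalizes_to R1" "(a, b2) \<in> normalizes_to R2"
  shows "(b1, b2) \<in> E"
proof -
  have "(a, b1) \<in> conversion_modulo R1 E"
    using assms(5) rtrancl_subset_conversion_modulo unfolding normalizes_to_def by blast
  then have "(b1, a) \<in> conversion_modulo R1 E"
    by (rule symD[OF sym_conversion_modulo[OF assms(1)]])
  moreover have "(a, b2) \<in> conversion_modulo R2 E"
    using assms(6) rtrancl_subset_conversion_modulo unfolding normalizes_to_def by blast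
  then have "(a, b2) \<in> conversion_modulo R1 E"
    using conversion_modulo_subset[OF assms(1,4)] by blast
  ultimately have "(b1, b2) \<in> conversion_modulo R1 E" by (rule rtrancl_trans)
  moreover have "b1 \<in> NF R1" "b2 \<in> NF R1"
    using assms(3,5,6) unfolding normalizes_to_def by blast+
  ultimately show ?thesis by (rule CR_modulo_conversion_NF_imp_equiv[OF assms(2)])
qed

lemma normalization_equivalent_modulo_if_conversion_subset:
  assumes "equiv UNIV E" "CR_modulo R1 E" "NF R2 \<subseteq> NF R1" "R2 \<subseteq> conversion_modulo R1 E"
    and "wf (R1\<inverse>)" "wf (R2\<inverse>)"
  shows "normalization_equivalent_modulo R1 R2 E"
proof -
  have "sym E" "trans E" using assms(1) by (auto elim: equivE)
  note equiv_nfs = normal_forms_equiv_across_systems[OF \<open>sym E\<close> assms(2-4)]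
  have "normalizes_to R1 O E \<subseteq> normalizes_to R2 O E"
  proof safe
    fix a b1 c assume b1: "(a, b1) \<in> normalizes_to R1" and "(b1, c) \<in> E"
    obtain b2 where b2: "(a, b2) \<in> normalizes_to R2"
      using wf_converse_imp_normalizable[OF assms(6)] by blast
    have "(b2, b1) \<in> E" using \<open>sym E\<close> equiv_nfs[OF b1 b2] by (rule symD)
    then have "(b2, c) \<in> E" using \<open>trans E\<close> \<open>(b1, c) \<in> E\<close> by (blast dest: transD)
    with b2 show "(a, c) \<in> normalizes_to R2 O E" by blast
  qed
  moreover have "normalizes_to R2 O E \<subseteq> normalizes_to R1 O E"
  proof safe
    fix a b2 c assume b2: "(a, b2) \<in> normalizes_to R2" and "(b2, c) \<in> E"
    obtain b1 where b1: "(a, b1) \<in> normalizes_to R1"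
      using wf_converse_imp_normalizable[OF assms(5)] by blast
    have "(b1, c) \<in> E"
      using \<open>trans E\<close> equiv_nfs[OF b1 b2] \<open>(b2, c) \<in> E\<close> by (rule transD)
    with b1 show "(a, c) \<in> normalizes_to R1 O E" by blast
  qed
  ultimately show ?thesis unfolding normalization_equivalent_modulo_def by blast
qed

theorem lemma6p4:
  fixes R1 R2 E :: "'a rel"
  assumes "equiv UNIV E"
    and "NF R2 \<subseteq> NF R1"
    and "R2 \<subseteq> (E O R1 O E)\<^sup>+"
    and "complete_modulo R1 E"
  shows "complete_modulo R2 E \<and> normalization_equivalent_modulo R1 R2 E"
proof -
  have "refl E" "sym E" "trans E" using assms(1) by (auto elim: equivE)
  have term1: "terminating_modulo R1 E" and CR1: "CR_modulo R1 E"
    using assms(4) unfolding complete_modulo_def by blast+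
  have term2: "terminating_modulo R2 E"
    using terminating_modulo_trancl_subset[OF \<open>trans E\<close> assms(3) term1] .
  have conv: "R2 \<subseteq> conversion_modulo R1 E"
    using assms(3) trancl_relcomp_subset_conversion_modulo by blast
  have wf1: "wf (R1\<inverse>)" and wf2: "wf (R2\<inverse>)"
    using terminating_modulo_imp_wf_converse[OF \<open>refl E\<close>] term1 term2 by blast+
  have "CR_modulo R2 E"
    using CR_modulo_if_conversion_subset[OF \<open>sym E\<close> CR1 assms(2) conv wf2] .
  moreover have "normalization_equivalent_modulo R1 R2 E"
    using normalization_equivalent_modulo_if_conversion_subset[OF assms(1) CR1 assms(2) conv wf1 wf2] .
  ultimately show ?thesis using term2 unfolding complete_modulo_def by blast
qed

end
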